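(* Let $X$ be a random variable with finite support in $(l,r)$ (with $l,r$ finite), such that $(\theta,1-\theta)\in D_X$ for all $\theta\in(0,1)$. Then $$G_X(\theta,1-\theta)\le[r-\mathbb{E}(X)]^\theta[\mathbb{E}(X)-l]^{1-\theta}\qquad\text{for all }\theta\in(0,1).$$
   Context: For a random variable $X$ with CDF $F$ and survival function $\overline F=1-F$, with $l=\inf\{x:F(x)>0\}$, $r=\sup\{x:\overline F(x)>0\}$, the CIGF is $G_X(\alpha,\beta)=\int_l^r [F(x)]^\alpha[\overline F(x)]^\beta\,dx$ on $D_X=\{(\alpha,\beta)\in\mathbb{R}^2: G_X(\alpha,\beta)<\infty\}$. *)

theory Defs
  imports "HOL-Probability.Probability"
begin

definition cdf_rv :: "'a measure \<Rightarrow> ('a \<Rightarrow> real) \<Rightarrow> real \<Rightarrow> real" where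
  "cdf_rv M X x = measure M {\<omega> \<in> space M. X \<omega> \<le> x}"

definition surv_rv :: "'a measure \<Rightarrow> ('a \<Rightarrow> real) \<Rightarrow> real \<Rightarrow> real" where
  "surv_rv M X x = 1 - cdf_rv M X x"

definition lsupp :: "'a measure \<Rightarrow> ('a \<Rightarrow> real) \<Rightarrow> real" where
  "lsupp M X = Inf {x. cdf_rv M X x > 0}"

definition rsupp :: "'a measure \<Rightarrow> ('a \<Rightarrow> real) \<Rightarrow> real" where
  "rsupp M X = Sup {x. surv_rv M X x > 0}"

text \<open>Integrand of the CIGF; the integral is taken over (l,r) (endpoints are null sets).\<close>
definition cigf_integrand :: "'a measure \<Rightarrow> ('a \<Rightarrow> real) \<Rightarrow> real \<Rightarrow> real \<Rightarrow> real \<Rightarrow> real" where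
  "cigf_integrand M X \<alpha> \<beta> x = cdf_rv M X x powr \<alpha> * surv_rv M X x powr \<beta>"

definition cigf :: "'a measure \<Rightarrow> ('a \<Rightarrow> real) \<Rightarrow> real \<Rightarrow> real \<Rightarrow> real" where
  "cigf M X \<alpha> \<beta> =
     (\<integral>x \<in> {lsupp M X<..<rsupp M X}. cigf_integrand M X \<alpha> \<beta> x \<partial>lborel)"

definition cigf_dom :: "'a measure \<Rightarrow> ('a \<Rightarrow> real) \<Rightarrow> (real \<times> real) set" where
  "cigf_dom M X = {(\<alpha>, \<beta>).
     (\<integral>\<^sup>+ x \<in> {lsupp M X<..<rsupp M X}. ennreal (cigf_integrand M X \<alpha> \<beta> x) \<partial>lborel) < \<infinity>}"

end

theory Submission
  imports Defs
begin

text \<open>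
  On \<open>I = (l, r)\<close> put \<open>A = \<integral>\<^sub>I F\<close> and \<open>B = \<integral>\<^sub>I (1 - F)\<close>. Since \<open>X\<close> lives in \<open>[l, r]\<close>,
  the layer cake formula gives \<open>B = E X - l\<close>, and \<open>A + B = r - l\<close> gives \<open>A = r - E X\<close>.
  Integrating the weighted AM-GM inequality
  \<open>(F/A)\<^sup>\<theta> ((1-F)/B)\<^sup>1\<^sup>-\<^sup>\<theta> \<le> \<theta> F/A + (1-\<theta>) (1-F)/B\<close> over \<open>I\<close> yields
  \<open>\<integral>\<^sub>I F\<^sup>\<theta> (1-F)\<^sup>1\<^sup>-\<^sup>\<theta> \<le> A\<^sup>\<theta> B\<^sup>1\<^sup>-\<^sup>\<theta>\<close>, i.e. Hoelder's inequality with exponents \<open>1/\<theta>\<close> and \<open>1/(1-\<theta>)\<close>.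
\<close>

lemma powr_mult_powr_le_convex_comb:
  fixes a b \<theta> :: real
  assumes "0 \<le> a" "0 \<le> b" "0 \<le> \<theta>" "\<theta> \<le> 1"
  shows "a powr \<theta> * b powr (1 - \<theta>) \<le> \<theta> * a + (1 - \<theta>) * b"
proof (cases "a = 0 \<or> b = 0")
  case True
  then show ?thesis using assms by auto
next
  case False
  then show ?thesis using assms by (intro Youngs_inequality_0) auto
qed

lemma powr_mult_powr_le_scaled_convex_comb:
  fixes a b A B \<theta> :: real
  assumes "0 \<le> a" "0 \<le> b" "0 < A" "0 < B" "0 \<le> \<theta>" "\<theta> \<le> 1"
  shows "a powr \<theta> * b powr (1 - \<theta>)
           \<le> A powr \<theta> * B powr (1 - \<theta>) * (\<theta> / A * a + (1 - \<theta>) / B * b)"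
proof -
  have "a powr \<theta> * b powr (1 - \<theta>) = A powr \<theta> * B powr (1 - \<theta>) * ((a / A) powr \<theta> * (b / B) powr (1 - \<theta>))"
    using assms by (simp add: powr_divide field_simps)
  also have "\<dots> \<le> A powr \<theta> * B powr (1 - \<theta>) * (\<theta> * (a / A) + (1 - \<theta>) * (b / B))"
    using assms by (intro mult_left_mono powr_mult_powr_le_convex_comb) auto
  finally show ?thesis by simp
qed

lemma set_integral_nonneg_eq_0_imp_AE:
  fixes f :: "'a \<Rightarrow> real"
  assumes [measurable]: "I \<in> sets M" "f \<in> borel_measurable M"
    and "set_integrable M I f" "\<And>x. x \<in> I \<Longrightarrow> 0 \<le> f x" "(LINT x:I|M. f x) = 0"
  shows "AE x \<in> I in M. f x = 0"
proof -
  have "AE x in M. indicator I x *\<^sub>R f x = 0"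
    using assms(3-5) unfolding set_integrable_def set_lebesgue_integral_def
    by (subst integral_nonneg_eq_0_iff_AE[symmetric]) (auto split: split_indicator)
  then show ?thesis by eventually_elim (auto split: split_indicator)
qed

lemma set_integrable_powr_mult_powr:
  fixes f g :: "'a \<Rightarrow> real"
  assumes [measurable]: "I \<in> sets M" "f \<in> borel_measurable M" "g \<in> borel_measurable M"
    and "set_integrable M I f" "set_integrable M I g"
    and "\<And>x. x \<in> I \<Longrightarrow> 0 \<le> f x" "\<And>x. x \<in> I \<Longrightarrow> 0 \<le> g x"
    and "0 \<le> \<theta>" "\<theta> \<le> 1"
  shows "set_integrable M I (\<lambda>x. f x powr \<theta> * g x powr (1 - \<theta>))"
proof (rule set_integrable_bound)
  show "set_integrable M I (\<lambda>x. \<theta> * f x + (1 - \<theta>) * g x)"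
    using assms by (intro set_integral_add) auto
  show "set_borel_measurable M I (\<lambda>x. f x powr \<theta> * g x powr (1 - \<theta>))"
    unfolding set_borel_measurable_def by measurable
  show "AE x in M. x \<in> I \<longrightarrow>
          norm (f x powr \<theta> * g x powr (1 - \<theta>)) \<le> norm (\<theta> * f x + (1 - \<theta>) * g x)"
    using assms powr_mult_powr_le_convex_comb[of "f x" "g x" \<theta> for x] by auto
qed

lemma set_integral_powr_mult_powr_le:
  fixes f g :: "'a \<Rightarrow> real"
  assumes [measurable]: "I \<in> sets M" "f \<in> borel_measurable M" "g \<in> borel_measurable M"
    and int_f: "set_integrable M I f" and int_g: "set_integrable M I g"
    and f_nonneg: "\<And>x. x \<in> I \<Longrightarrow> 0 \<le> f x" and g_nonneg: "\<And>x. x \<in> I \<Longrightarrow> 0 \<le> g x"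
    and \<theta>: "0 < \<theta>" "\<theta> < 1"
  shows "(LINT x:I|M. f x powr \<theta> * g x powr (1 - \<theta>))
           \<le> (LINT x:I|M. f x) powr \<theta> * (LINT x:I|M. g x) powr (1 - \<theta>)"
proof -
  define A where "A = (LINT x:I|M. f x)"
  define B where "B = (LINT x:I|M. g x)"
  have "0 \<le> A" "0 \<le> B"
    unfolding A_def B_def set_lebesgue_integral_def using f_nonneg g_nonneg
    by (auto intro!: integral_nonneg split: split_indicator)
  show ?thesis
  proof (cases "A = 0 \<or> B = 0")
    case True
    then have "AE x \<in> I in M. f x = 0 \<or> g x = 0"
      using set_integral_nonneg_eq_0_imp_AE[of I M f] set_integral_nonneg_eq_0_imp_AE[of I M g]
        int_f int_g f_nonneg g_nonneg unfolding A_def B_def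
      by (auto elim: AE_mp)
    then have "AE x \<in> I in M. f x powr \<theta> * g x powr (1 - \<theta>) = 0"
      by eventually_elim auto
    then have "(LINT x:I|M. f x powr \<theta> * g x powr (1 - \<theta>)) = 0"
      by (subst set_lebesgue_integral_cong_AE[where g = "\<lambda>_. 0"]) auto
    with \<open>0 \<le> A\<close> \<open>0 \<le> B\<close> show ?thesis by (simp add: A_def B_def)
  next
    case False
    with \<open>0 \<le> A\<close> \<open>0 \<le> B\<close> have "0 < A" "0 < B" by auto
    define c where "c = A powr \<theta> * B powr (1 - \<theta>)"
    have "(LINT x:I|M. f x powr \<theta> * g x powr (1 - \<theta>))
        \<le> (LINT x:I|M. c * (\<theta> / A * f x + (1 - \<theta>) / B * g x))"
      using int_f int_g f_nonneg g_nonneg \<theta> \<open>0 < A\<close> \<open>0 < B\<close> unfolding c_def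
      by (intro set_integral_mono set_integrable_powr_mult_powr powr_mult_powr_le_scaled_convex_comb)
        auto
    also have "\<dots> = c * (\<theta> / A * A + (1 - \<theta>) / B * B)"
      using int_f int_g by (simp add: A_def B_def)
    also have "\<dots> = c" using \<open>0 < A\<close> \<open>0 < B\<close> by simp
    finally show ?thesis by (simp add: c_def A_def B_def)
  qed
qed

lemma set_integrable_Ioo_bounded:
  fixes h :: "real \<Rightarrow> real"
  assumes "h \<in> borel_measurable lborel" "\<And>x. \<bar>h x\<bar> \<le> C"
  shows "set_integrable lborel {a<..<b} h"
  unfolding set_integrable_def
proof (rule integrableI_bounded_set_indicator[where B = C])
  show "emeasure lborel {a<..<b} < \<infinity>" by (cases "a \<le> b") auto
qed (use assms in auto)

lemma cdf_rv_nonneg: "0 \<le> cdf_rv M X x"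
  by (simp add: cdf_rv_def)

context prob_space
begin

lemma surv_rv_eq_prob_greater:
  assumes [measurable]: "X \<in> borel_measurable M"
  shows "surv_rv M X x = prob {\<omega> \<in> space M. x < X \<omega>}"
proof -
  have "{\<omega> \<in> space M. x < X \<omega>} = space M - {\<omega> \<in> space M. X \<omega> \<le> x}" by auto
  then show ?thesis by (simp add: surv_rv_def cdf_rv_def prob_compl)
qed

lemma cdf_rv_borel_measurable [measurable]:
  assumes [measurable]: "X \<in> borel_measurable M"
  shows "cdf_rv M X \<in> borel_measurable borel"
  by (rule borel_measurable_mono) (auto intro!: monoI finite_measure_mono simp: cdf_rv_def)

lemma surv_rv_borel_measurable [measurable]:
  "X \<in> borel_measurable M \<Longrightarrow> surv_rv M X \<in> borel_measurable borel"
  unfolding surv_rv_def[abs_def] by measurable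

lemma surv_rv_nonneg: "X \<in> borel_measurable M \<Longrightarrow> 0 \<le> surv_rv M X t"
  by (simp add: surv_rv_eq_prob_greater)

lemma set_integrable_surv_rv:
  "X \<in> borel_measurable M \<Longrightarrow> set_integrable lborel {a<..<b} (surv_rv M X)"
  by (rule set_integrable_Ioo_bounded[where C = 1]) (auto simp: surv_rv_eq_prob_greater)

lemma set_integrable_cdf_rv:
  "X \<in> borel_measurable M \<Longrightarrow> set_integrable lborel {a<..<b} (cdf_rv M X)"
  by (rule set_integrable_Ioo_bounded[where C = 1]) (auto simp: cdf_rv_def)

lemma AE_lsupp_le:
  assumes [measurable]: "X \<in> borel_measurable M"
    and bdd: "bdd_below {x. cdf_rv M X x > 0}"
  shows "AE \<omega> in M. lsupp M X \<le> X \<omega>"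
proof -
  have "AE \<omega> in M. q < X \<omega>" if "q < lsupp M X" for q
  proof -
    have "\<not> cdf_rv M X q > 0"
      using that bdd cInf_lower[of q "{x. cdf_rv M X x > 0}"] by (auto simp: lsupp_def)
    then have "cdf_rv M X q = 0"
      using cdf_rv_nonneg[of M X q] by linarith
    then have "\<P>(\<omega> in M. X \<omega> \<le> q) = 0" by (simp add: cdf_rv_def)
    then show ?thesis by (subst (asm) prob_Collect_eq_0) (auto simp: not_le)
  qed
  then have "AE \<omega> in M. \<forall>q \<in> \<rat> \<inter> {..<lsupp M X}. q < X \<omega>"
    by (intro AE_ball_countable') (auto intro: countable_subset[OF _ countable_rat])
  then show ?thesis
  proof eventually_elim
    fix \<omega> assume above: "\<forall>q \<in> \<rat> \<inter> {..<lsupp M X}. q < X \<omega>"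
    show "lsupp M X \<le> X \<omega>"
    proof (rule ccontr)
      assume "\<not> lsupp M X \<le> X \<omega>"
      then obtain q where "q \<in> \<rat>" "X \<omega> < q" "q < lsupp M X"
        using Rats_dense_in_real by (meson not_le)
      with above show False by (metis IntI lessThan_iff less_asym)
    qed
  qed
qed

lemma AE_le_rsupp:
  assumes [measurable]: "X \<in> borel_measurable M"
    and bdd: "bdd_above {x. surv_rv M X x > 0}"
  shows "AE \<omega> in M. X \<omega> \<le> rsupp M X"
proof -
  have "AE \<omega> in M. X \<omega> \<le> q" if "rsupp M X < q" for q
  proof -
    have "\<not> surv_rv M X q > 0"
      using that bdd cSup_upper[of q "{x. surv_rv M X x > 0}"] by (auto simp: rsupp_def)
    then have "\<P>(\<omega> in M. q < X \<omega>) = 0"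
      using measure_nonneg[of M "{\<omega> \<in> space M. q < X \<omega>}"] by (simp add: surv_rv_eq_prob_greater)
    then show ?thesis by (subst (asm) prob_Collect_eq_0) (auto simp: not_less)
  qed
  then have "AE \<omega> in M. \<forall>q \<in> \<rat> \<inter> {rsupp M X<..}. X \<omega> \<le> q"
    by (intro AE_ball_countable') (auto intro: countable_subset[OF _ countable_rat])
  then show ?thesis
  proof eventually_elim
    fix \<omega> assume below: "\<forall>q \<in> \<rat> \<inter> {rsupp M X<..}. X \<omega> \<le> q"
    show "X \<omega> \<le> rsupp M X"
    proof (rule ccontr)
      assume "\<not> X \<omega> \<le> rsupp M X"
      then obtain q where "q \<in> \<rat>" "rsupp M X < q" "q < X \<omega>"
        using Rats_dense_in_real by (meson not_le)
      with below show False by (metis IntI greaterThan_iff not_le)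
    qed
  qed
qed

lemma set_integral_surv_rv:
  assumes [measurable]: "X \<in> borel_measurable M"
    and bounds: "AE \<omega> in M. a \<le> X \<omega> \<and> X \<omega> \<le> b"
  shows "(LINT t:{a<..<b}|lborel. surv_rv M X t) = expectation X - a"
proof -
  interpret pair_sigma_finite M lborel
    by (simp add: pair_sigma_finite_def sigma_finite_lborel sigma_finite_measure_axioms)
  let ?I = "{a<..<b}" and ?S = "surv_rv M X"
  define f where "f \<omega> t = ennreal (indicator {t. a < t \<and> t < b \<and> t < X \<omega>} t)" for \<omega> t
  have [measurable]: "case_prod f \<in> borel_measurable (M \<Otimes>\<^sub>M lborel)"
    unfolding f_def by measurable
  have int_X: "integrable M X"
    by (rule integrable_const_bound[where B = "\<bar>a\<bar> + \<bar>b\<bar>"]) (use bounds in auto)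
  have inner_M: "(\<integral>\<^sup>+ \<omega>. f \<omega> t \<partial>M) = ennreal (indicator ?I t * ?S t)" for t
  proof (cases "t \<in> ?I")
    case True
    then have "(\<integral>\<^sup>+ \<omega>. f \<omega> t \<partial>M) = (\<integral>\<^sup>+ \<omega>. indicator {\<omega> \<in> space M. t < X \<omega>} \<omega> \<partial>M)"
      by (intro nn_integral_cong) (auto simp: f_def indicator_def)
    with True show ?thesis by (simp add: surv_rv_eq_prob_greater emeasure_eq_measure)
  qed (auto simp: f_def)
  have inner_lborel: "(\<integral>\<^sup>+ t. f \<omega> t \<partial>lborel) = ennreal (X \<omega> - a)"
    if "a \<le> X \<omega>" "X \<omega> \<le> b" for \<omega>
  proof -
    have "(\<integral>\<^sup>+ t. f \<omega> t \<partial>lborel) = (\<integral>\<^sup>+ t. indicator {a<..<X \<omega>} t \<partial>lborel)"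
      using that by (intro nn_integral_cong) (auto simp: f_def indicator_def)
    then show ?thesis using that by simp
  qed
  have "ennreal (LINT t:?I|lborel. ?S t) = (\<integral>\<^sup>+ t. ennreal (indicator ?I t * ?S t) \<partial>lborel)"
    using set_integrable_surv_rv[OF assms(1)] unfolding set_integrable_def set_lebesgue_integral_def
    by (subst nn_integral_eq_integral) (auto simp: surv_rv_nonneg[OF assms(1)])
  also have "\<dots> = (\<integral>\<^sup>+ t. \<integral>\<^sup>+ \<omega>. f \<omega> t \<partial>M \<partial>lborel)"
    by (simp add: inner_M)
  also have "\<dots> = (\<integral>\<^sup>+ \<omega>. \<integral>\<^sup>+ t. f \<omega> t \<partial>lborel \<partial>M)"
    by (rule Fubini') measurable
  also have "\<dots> = (\<integral>\<^sup>+ \<omega>. ennreal (X \<omega> - a) \<partial>M)"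
    using bounds by (intro nn_integral_cong_AE) (auto elim!: AE_mp simp: inner_lborel)
  also have "\<dots> = ennreal (expectation (\<lambda>\<omega>. X \<omega> - a))"
    using int_X bounds by (intro nn_integral_eq_integral) (auto elim!: AE_mp)
  moreover have "0 \<le> (LINT t:?I|lborel. ?S t)"
    unfolding set_lebesgue_integral_def by (auto intro!: integral_nonneg simp: surv_rv_nonneg[OF assms(1)])
  moreover have "0 \<le> expectation (\<lambda>\<omega>. X \<omega> - a)"
    using bounds by (intro integral_nonneg_AE) (auto elim: AE_mp)
  ultimately have "(LINT t:?I|lborel. ?S t) = expectation (\<lambda>\<omega>. X \<omega> - a)"
    by simp
  then show ?thesis using int_X by (simp add: prob_space)
qed

lemma set_integral_cdf_rv:
  assumes [measurable]: "X \<in> borel_measurable M"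
    and bounds: "AE \<omega> in M. a \<le> X \<omega> \<and> X \<omega> \<le> b"
  shows "(LINT t:{a<..<b}|lborel. cdf_rv M X t) = b - expectation X"
proof -
  have "AE \<omega> in M. a \<le> b" using bounds by eventually_elim auto
  then have "a \<le> b" by simp
  have "(LINT t:{a<..<b}|lborel. cdf_rv M X t) = (LINT t:{a<..<b}|lborel. 1 - surv_rv M X t)"
    by (simp add: surv_rv_def)
  also have "\<dots> = (LINT t:{a<..<b}|lborel. 1) - (LINT t:{a<..<b}|lborel. surv_rv M X t)"
    by (intro set_integral_diff(2) set_integrable_surv_rv[OF assms(1)]
        set_integrable_Ioo_bounded[where C = 1]) auto
  also have "\<dots> = (b - a) - (expectation X - a)"
    using \<open>a \<le> b\<close> by (simp add: set_integral_const set_integral_surv_rv[OF assms])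
  finally show ?thesis by simp
qed

end

theorem proposition7:
  fixes M :: "'a measure" and X :: "'a \<Rightarrow> real"
  assumes "prob_space M"
    and "X \<in> borel_measurable M"
    and "bdd_below {x. cdf_rv M X x > 0}"
    and "bdd_above {x. surv_rv M X x > 0}"
    and "\<forall>\<theta>::real. 0 < \<theta> \<and> \<theta> < 1 \<longrightarrow> (\<theta>, 1 - \<theta>) \<in> cigf_dom M X"
  shows "\<forall>\<theta>::real. 0 < \<theta> \<and> \<theta> < 1 \<longrightarrow>
           cigf M X \<theta> (1 - \<theta>)
             \<le> (rsupp M X - prob_space.expectation M X) powr \<theta>
                * (prob_space.expectation M X - lsupp M X) powr (1 - \<theta>)"
proof (intro allI impI)
  fix \<theta> :: real
  assume \<theta>: "0 < \<theta> \<and> \<theta> < 1"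
  interpret prob_space M by fact
  let ?l = "lsupp M X" and ?r = "rsupp M X" and ?E = "expectation X"
  have bounds: "AE \<omega> in M. ?l \<le> X \<omega> \<and> X \<omega> \<le> ?r"
    using AE_lsupp_le[OF assms(2,3)] AE_le_rsupp[OF assms(2,4)] by eventually_elim auto
  have "cigf M X \<theta> (1 - \<theta>)
      = (LINT t:{?l<..<?r}|lborel. cdf_rv M X t powr \<theta> * surv_rv M X t powr (1 - \<theta>))"
    by (simp add: cigf_def cigf_integrand_def)
  also have "\<dots> \<le> (LINT t:{?l<..<?r}|lborel. cdf_rv M X t) powr \<theta>
                  * (LINT t:{?l<..<?r}|lborel. surv_rv M X t) powr (1 - \<theta>)"
    using \<theta> assms(2)
    by (intro set_integral_powr_mult_powr_le)
      (auto simp: set_integrable_cdf_rv set_integrable_surv_rv surv_rv_nonneg cdf_rv_nonneg)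
  also have "\<dots> = (?r - ?E) powr \<theta> * (?E - ?l) powr (1 - \<theta>)"
    by (simp add: set_integral_cdf_rv[OF assms(2) bounds] set_integral_surv_rv[OF assms(2) bounds])
  finally show "cigf M X \<theta> (1 - \<theta>) \<le> (?r - ?E) powr \<theta> * (?E - ?l) powr (1 - \<theta>)" .
qed

end
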